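(* If the bounded plane domain $D$ has rotational symmetry of order $N\ge3$ and $T$ is an invertible $2\times2$ real matrix, then \[ \frac{I(TD)}{A(TD)^2}=\frac{I(T^{-1}D)}{A(T^{-1}D)^2}, \] and the same identity holds with $T^{-\dagger}D$ (the image under the inverse transpose) in place of $T^{-1}D$.
   Context: Rotational symmetry of order $N$ means invariance under rotation by $2\pi/N$ about some point. $A$ is area; $I(\Omega)=\int_\Omega|x-\bar x|^2dx$ the moment of inertia about the centroid $\bar x$. *)

theory Defs
  imports "HOL-Analysis.Analysis"
begin

definition area :: "(real^2) set \<Rightarrow> real" where
  "area \<Omega> = measure lebesgue \<Omega>"

definition centroid :: "(real^2) set \<Rightarrow> real^2" where
  "centroid \<Omega> = (1 / area \<Omega>) *\<^sub>R integral \<Omega> (\<lambda>x. x)"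

definition inertia :: "(real^2) set \<Rightarrow> real" where
  "inertia \<Omega> = integral \<Omega> (\<lambda>x. (norm (x - centroid \<Omega>))\<^sup>2)"

definition rot_mat :: "real \<Rightarrow> real^2^2" where
  "rot_mat t = vector [vector [cos t, - sin t], vector [sin t, cos t]]"

definition bounded_domain :: "(real^2) set \<Rightarrow> bool" where
  "bounded_domain D \<longleftrightarrow> D \<noteq> {} \<and> open D \<and> connected D \<and> bounded D"

definition rot_symmetric :: "nat \<Rightarrow> (real^2) set \<Rightarrow> bool" where
  "rot_symmetric N D \<longleftrightarrow>
     (\<exists>c. (\<lambda>x. c + rot_mat (2 * pi / real N) *v (x - c)) ` D = D)"

end

theory Submission
  imports Defs
begin

(*
  The proof averages over the symmetry.  For a continuous u intertwining the rotation
  by t with a rotation by s (cos s \<noteq> 1), the integral of u(y - p) over D is fixed by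
  that rotation and therefore vanishes.  Taking u = id shows that p is the centroid c;
  taking u = complex squaring (s = 2t) shows that the second moments are isotropic:
  the integrals of (y1 - c1)^2 and (y2 - c2)^2 agree, and that of (y1 - c1)(y2 - c2)
  is zero.  Changing variables under x \<mapsto> M x then gives
      I(M D) / A(M D)^2 = (m / A(D)^2) * |M|^2 / |det M|,
  with m the common second moment and |M| the Frobenius norm.  For 2 \<times> 2 matrices
  the quantity |M|^2 / |det M| is unchanged under M \<mapsto> M^-1 and M \<mapsto> M^T, which
  yields the theorem.
*)

lemma continuous_absolutely_integrable_on_bounded:
  fixes f :: "'a::euclidean_space \<Rightarrow> 'b::euclidean_space"
  assumes "bounded S" "S \<in> sets lebesgue" "continuous_on UNIV f"
  shows "f absolutely_integrable_on S"
proof -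
  obtain a b where "S \<subseteq> cbox a b"
    using assms(1) bounded_subset_cbox_symmetric by blast
  moreover have "f absolutely_integrable_on cbox a b"
    using assms(3) absolutely_integrable_continuous continuous_on_subset by blast
  ultimately show ?thesis
    using assms(2) set_integrable_subset by blast
qed

lemma continuous_integrable_on_bounded:
  fixes f :: "'a::euclidean_space \<Rightarrow> 'b::euclidean_space"
  assumes "bounded S" "S \<in> sets lebesgue" "continuous_on UNIV f"
  shows "f integrable_on S"
  using continuous_absolutely_integrable_on_bounded[OF assms] set_lebesgue_integral_eq_integral(1)
  by blast

lemma continuous_on_matrix_vector_mult [continuous_intros]:
  fixes M :: "real^'n^'m"
  shows "continuous_on S f \<Longrightarrow> continuous_on S (\<lambda>x. M *v f x)"
  using bounded_linear.continuous_on[OF matrix_vector_mul_bounded_linear] .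

lemma change_of_variables_affine:
  fixes f :: "real^'m::{finite,wellorder} \<Rightarrow> real^'n" and M :: "real^'m::_^'m::_"
  assumes S: "S \<in> sets lebesgue" and M: "invertible M"
    and int: "(\<lambda>x. f (M *v x + b)) absolutely_integrable_on S"
  shows "f absolutely_integrable_on (\<lambda>x. M *v x + b) ` S"
    and "integral ((\<lambda>x. M *v x + b) ` S) f = \<bar>det M\<bar> *\<^sub>R integral S (\<lambda>x. f (M *v x + b))"
proof -
  let ?g = "\<lambda>x. M *v x + b"
  have der: "(?g has_derivative (\<lambda>h. M *v h)) (at x within S)" for x
    by (intro has_derivative_add_const linear_imp_has_derivative matrix_vector_mul_linear)
  have inj: "inj_on ?g S"
    using inj_matrix_vector_mult[OF M] by (auto simp: inj_on_def dest: injD)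
  have "(\<lambda>x. \<bar>det (matrix (\<lambda>h. M *v h))\<bar> *\<^sub>R f (?g x)) absolutely_integrable_on S
      \<and> integral S (\<lambda>x. \<bar>det (matrix (\<lambda>h. M *v h))\<bar> *\<^sub>R f (?g x))
          = \<bar>det M\<bar> *\<^sub>R integral S (\<lambda>x. f (?g x))"
    using int by (simp add: absolutely_integrable_on_scaleR_iff)
  then show "f absolutely_integrable_on ?g ` S"
    and "integral (?g ` S) f = \<bar>det M\<bar> *\<^sub>R integral S (\<lambda>x. f (?g x))"
    using has_absolute_integral_change_of_variables[OF S der inj] by blast+
qed

text \<open>The scalar version, obtained by embedding the reals as the one-dimensional vectors.\<close>
lemma change_of_variables_affine_real:
  fixes f :: "real^'m::{finite,wellorder} \<Rightarrow> real" and M :: "real^'m::_^'m::_"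
  assumes S: "S \<in> sets lebesgue" and M: "invertible M"
    and int: "(\<lambda>x. f (M *v x + b)) absolutely_integrable_on S"
  shows "integral ((\<lambda>x. M *v x + b) ` S) f = \<bar>det M\<bar> * integral S (\<lambda>x. f (M *v x + b))"
proof -
  let ?g = "\<lambda>x. M *v x + b" and ?F = "\<lambda>x. f x *\<^sub>R (1::real^1)"
  have "(\<lambda>x. ?F (?g x)) absolutely_integrable_on S"
    using int by (rule absolutely_integrable_scaleR_right)
  note cov = change_of_variables_affine[OF S M this]
  have int_img: "?F integrable_on ?g ` S"
    using cov(1) set_lebesgue_integral_eq_integral(1) by blast
  have int_pre: "(\<lambda>x. ?F (?g x)) integrable_on S"
    using int set_lebesgue_integral_eq_integral(1) integrable_on_scaleR_left by blast
  have "integral (?g ` S) f = integral (?g ` S) ?F $ 1"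
    using integral_component_eq_cart[OF int_img, of 1] by simp
  also have "\<dots> = \<bar>det M\<bar> * integral S (\<lambda>x. ?F (?g x)) $ 1"
    using cov(2) by simp
  also have "integral S (\<lambda>x. ?F (?g x)) $ 1 = integral S (\<lambda>x. f (?g x))"
    using integral_component_eq_cart[OF int_pre, of 1] by simp
  finally show ?thesis .
qed

lemma integral_const_lmeasurable:
  assumes "D \<in> lmeasurable"
  shows "integral D (\<lambda>x. c) = area D *\<^sub>R c"
proof -
  have "((\<lambda>x. 1::real) has_integral area D) D"
    unfolding area_def lmeasure_integral[OF assms]
    using assms lmeasurable_iff_integrable_on by blast
  from has_integral_scaleR_left[OF this, of c] show ?thesis
    by (simp add: integral_unique)
qed

lemma area_pos:
  assumes "bounded D" "open D" "D \<noteq> {}"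
  shows "area D > 0"
proof -
  have "D \<in> lmeasurable" using assms lmeasurable_open by blast
  moreover have "\<not> negligible D" using assms open_not_negligible by blast
  ultimately have "measure lebesgue D \<noteq> 0"
    using negligible_iff_measure0 by blast
  then show ?thesis
    unfolding area_def by (simp add: zero_less_measure_iff)
qed

lemma area_linear_image:
  assumes "D \<in> lmeasurable"
  shows "area ((\<lambda>x. M *v x) ` D) = \<bar>det M\<bar> * area D"
  unfolding area_def using measure_linear_image[OF matrix_vector_mul_linear assms, of M] by simp

lemma centroid_linear_image:
  assumes "bounded D" "D \<in> sets lebesgue" "invertible M"
  shows "centroid ((\<lambda>x. M *v x) ` D) = M *v centroid D"
proof -
  have L: "D \<in> lmeasurable" using assms bounded_set_imp_lmeasurable by blast
  have "(\<lambda>x. M *v x) absolutely_integrable_on D"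
    by (intro continuous_absolutely_integrable_on_bounded assms continuous_intros)
  then have "integral ((\<lambda>x. M *v x) ` D) (\<lambda>x. x) = \<bar>det M\<bar> *\<^sub>R integral D (\<lambda>x. M *v x)"
    using change_of_variables_affine(2)[OF assms(2,3), of "\<lambda>x. x" 0] by simp
  also have "integral D (\<lambda>x. M *v x) = M *v integral D (\<lambda>x. x)"
    using integral_linear[OF _ matrix_vector_mul_bounded_linear, of "\<lambda>x. x" D M]
      continuous_integrable_on_bounded[OF assms(1,2) continuous_on_id]
    by (simp add: o_def)
  finally have "integral ((\<lambda>x. M *v x) ` D) (\<lambda>x. x) = \<bar>det M\<bar> *\<^sub>R (M *v integral D (\<lambda>x. x))" .
  moreover have "det M \<noteq> 0"
    using assms(3) invertible_det_nz by blast
  ultimately show ?thesis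
    unfolding centroid_def area_linear_image[OF L]
    by (simp add: matrix_vector_mult_scaleR scaleR_matrix_vector_assoc)
qed

lemma inertia_linear_image:
  assumes "bounded D" "D \<in> sets lebesgue" "invertible M"
  shows "inertia ((\<lambda>x. M *v x) ` D)
           = \<bar>det M\<bar> * integral D (\<lambda>y. (norm (M *v (y - centroid D)))\<^sup>2)"
proof -
  let ?c = "centroid D"
  have "(\<lambda>y. (norm (M *v y - M *v ?c))\<^sup>2) absolutely_integrable_on D"
    by (intro continuous_absolutely_integrable_on_bounded assms continuous_intros)
  then have "integral ((\<lambda>x. M *v x) ` D) (\<lambda>x. (norm (x - M *v ?c))\<^sup>2)
      = \<bar>det M\<bar> * integral D (\<lambda>y. (norm (M *v y - M *v ?c))\<^sup>2)"
    using change_of_variables_affine_real[OF assms(2,3), of "\<lambda>x. (norm (x - M *v ?c))\<^sup>2" 0] by simp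
  then show ?thesis
    unfolding inertia_def centroid_linear_image[OF assms] by (simp add: matrix_vector_mult_diff_distrib)
qed

lemma rot_mat_vector_components [simp]:
  "(rot_mat t *v v) $ 1 = cos t * v $ 1 - sin t * v $ 2"
  "(rot_mat t *v v) $ 2 = sin t * v $ 1 + cos t * v $ 2"
  by (simp_all add: rot_mat_def matrix_vector_mult_def sum_2)

lemma det_rot_mat [simp]: "det (rot_mat t) = 1"
  by (simp add: det_2 rot_mat_def flip: power2_eq_square)

lemma rot_mat_fixed_point:
  assumes "cos t \<noteq> 1" and fixed: "rot_mat t *v w = w"
  shows "w = 0"
proof -
  have e1: "w$1 = cos t * w$1 - sin t * w$2" and e2: "w$2 = sin t * w$1 + cos t * w$2"
    using arg_cong[OF fixed, of "\<lambda>v. v$1"] arg_cong[OF fixed, of "\<lambda>v. v$2"] by simp_all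
  have pyth: "sin t ^ 2 + cos t ^ 2 = 1" by simp
  have "(2 - 2 * cos t) * w$1 = 0" and "(2 - 2 * cos t) * w$2 = 0"
    using e1 e2 pyth by algebra+
  then show ?thesis
    using assms(1) by (simp add: vec_eq_iff forall_2)
qed

lemma cos_ne_1:
  assumes "0 < t" "t < 2 * pi"
  shows "cos t \<noteq> 1"
proof
  assume "cos t = 1"
  then obtain n :: int where n: "t = of_int n * 2 * pi"
    using cos_one_2pi_int by blast
  then have "0 < of_int n * (2 * pi)" and "of_int n * (2 * pi) < 1 * (2 * pi)"
    using assms by simp_all
  then have "0 < n" and "n < 1"
    by (simp_all add: zero_less_mult_iff mult_less_cancel_right)
  then show False by simp
qed

text \<open>If D is invariant under the rotation by t about p,
  and u intertwines this rotation with the rotation by s, then the integral of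
  u(y - p) over D is fixed by the rotation by s, hence vanishes when cos s \<noteq> 1.\<close>
lemma integral_equivariant_vanishes:
  fixes u :: "real^2 \<Rightarrow> real^2"
  assumes D: "bounded D" "D \<in> sets lebesgue"
    and invariant: "(\<lambda>x. p + rot_mat t *v (x - p)) ` D = D"
    and cont: "continuous_on UNIV u"
    and equivariant: "\<And>z. u (rot_mat t *v z) = rot_mat s *v u z"
    and "cos s \<noteq> 1"
  shows "integral D (\<lambda>y. u (y - p)) = 0"
proof -
  let ?R = "rot_mat t" and ?b = "p - rot_mat t *v p"
  have affine: "(\<lambda>x. p + ?R *v (x - p)) = (\<lambda>x. ?R *v x + ?b)"
    by (simp add: fun_eq_iff matrix_vector_mult_diff_distrib)
  have invertible: "invertible ?R"
    by (simp add: invertible_det_nz)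
  have shift: "?R *v x + ?b - p = ?R *v (x - p)" for x
    by (simp add: matrix_vector_mult_diff_distrib)
  have integrable: "(\<lambda>x. u (?R *v x + ?b - p)) absolutely_integrable_on D"
    by (intro continuous_absolutely_integrable_on_bounded D continuous_on_compose2[OF cont])
       (auto intro!: continuous_intros)
  have integrable_u: "(\<lambda>y. u (y - p)) integrable_on D"
    by (intro continuous_integrable_on_bounded D continuous_on_compose2[OF cont])
       (auto intro!: continuous_intros)
  have "integral ((\<lambda>x. ?R *v x + ?b) ` D) (\<lambda>y. u (y - p))
      = integral D (\<lambda>x. u (?R *v x + ?b - p))"
    using change_of_variables_affine(2)[OF D(2) invertible integrable] by simp
  then have "integral D (\<lambda>y. u (y - p)) = integral D (\<lambda>x. rot_mat s *v u (x - p))"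
    using invariant unfolding affine shift equivariant by simp
  also have "\<dots> = rot_mat s *v integral D (\<lambda>y. u (y - p))"
    using integral_linear[OF integrable_u matrix_vector_mul_bounded_linear] by (simp add: o_def)
  finally have "rot_mat s *v integral D (\<lambda>y. u (y - p)) = integral D (\<lambda>y. u (y - p))" ..
  then show ?thesis
    using rot_mat_fixed_point \<open>cos s \<noteq> 1\<close> by blast
qed

text \<open>With u the identity: the centre of any nontrivial rotational symmetry is the centroid.\<close>
lemma centroid_eq_rotation_center:
  assumes D: "bounded D" "D \<in> sets lebesgue" and "area D > 0"
    and invariant: "(\<lambda>x. p + rot_mat t *v (x - p)) ` D = D"
    and "cos t \<noteq> 1"
  shows "centroid D = p"
proof -
  have L: "D \<in> lmeasurable" using D bounded_set_imp_lmeasurable by blast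
  have "integral D (\<lambda>y. y - p) = 0"
    using integral_equivariant_vanishes[OF D invariant continuous_on_id, of t] assms(5) by simp
  moreover have "integral D (\<lambda>y. y - p) = integral D (\<lambda>y. y) - area D *\<^sub>R p"
    using integral_diff[OF continuous_integrable_on_bounded[OF D continuous_on_id]
        continuous_integrable_on_bounded[OF D continuous_on_const]]
    by (simp add: integral_const_lmeasurable[OF L])
  ultimately show ?thesis
    using assms(3) unfolding centroid_def by simp
qed

text \<open>Identifying the plane with the complex numbers, the map z \<mapsto> z^2.  Its
  coordinates, integrated over D, are the differences of the second moments.\<close>
definition complex_square :: "real^2 \<Rightarrow> real^2" where
  "complex_square z = vector [z$1^2 - z$2^2, 2 * z$1 * z$2]"

lemma complex_square_components [simp]:
  "complex_square z $ 1 = z$1^2 - z$2^2"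
  "complex_square z $ 2 = 2 * z$1 * z$2"
  by (simp_all add: complex_square_def)

lemma complex_square_rot_mat: "complex_square (rot_mat t *v z) = rot_mat (2 * t) *v complex_square z"
  by (simp add: vec_eq_iff forall_2 cos_double sin_double) (simp add: power2_eq_square algebra_simps)

lemma continuous_on_complex_square: "continuous_on UNIV complex_square"
proof -
  have "continuous_on UNIV (\<lambda>z. complex_square z $ i)" for i :: 2
    using exhaust_2[of i] by (elim disjE) (simp_all add: continuous_intros)
  then have "continuous_on UNIV (\<lambda>z. \<chi> i. complex_square z $ i)"
    by (rule continuous_on_vec_lambda)
  then show ?thesis by simp
qed

text \<open>With u the squaring map: invariance under a rotation by t with cos(2t) \<noteq> 1 makes
  the second moment matrix about the centre a multiple of the identity.\<close>
lemma second_moments_isotropic: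
  assumes D: "bounded D" "D \<in> sets lebesgue"
    and invariant: "(\<lambda>x. c + rot_mat t *v (x - c)) ` D = D"
    and "cos (2 * t) \<noteq> 1"
  shows "integral D (\<lambda>y. (y$1 - c$1)\<^sup>2) = integral D (\<lambda>y. (y$2 - c$2)\<^sup>2)"
    and "integral D (\<lambda>y. (y$1 - c$1) * (y$2 - c$2)) = 0"
proof -
  let ?w = "integral D (\<lambda>y. complex_square (y - c))"
  have "?w = 0"
    by (rule integral_equivariant_vanishes[OF D invariant continuous_on_complex_square
          complex_square_rot_mat assms(4)])
  have integrable: "(\<lambda>y. complex_square (y - c)) integrable_on D"
    by (intro continuous_integrable_on_bounded D
          continuous_on_compose2[OF continuous_on_complex_square])
       (auto intro!: continuous_intros)
  have integrable_moments: "(\<lambda>y. (y$1 - c$1)\<^sup>2) integrable_on D"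
    "(\<lambda>y. (y$2 - c$2)\<^sup>2) integrable_on D" "(\<lambda>y. (y$1 - c$1) * (y$2 - c$2)) integrable_on D"
    by (intro continuous_integrable_on_bounded D continuous_intros)+
  have w1: "?w $ 1 = integral D (\<lambda>y. (y$1 - c$1)\<^sup>2) - integral D (\<lambda>y. (y$2 - c$2)\<^sup>2)"
    using integral_component_eq_cart[OF integrable, of 1]
      integral_diff[OF integrable_moments(1,2)] by simp
  have "?w $ 2 = integral D (\<lambda>y. complex_square (y - c) $ 2)"
    by (rule integral_component_eq_cart[OF integrable, symmetric])
  also have "\<dots> = integral D (\<lambda>y. 2 * ((y$1 - c$1) * (y$2 - c$2)))"
    by (rule integral_cong) (simp add: algebra_simps)
  also have "\<dots> = 2 * integral D (\<lambda>y. (y$1 - c$1) * (y$2 - c$2))"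
    by (rule integral_mult[OF integrable_moments(3), symmetric])
  finally have w2: "?w $ 2 = 2 * integral D (\<lambda>y. (y$1 - c$1) * (y$2 - c$2))" .
  show "integral D (\<lambda>y. (y$1 - c$1)\<^sup>2) = integral D (\<lambda>y. (y$2 - c$2)\<^sup>2)"
    and "integral D (\<lambda>y. (y$1 - c$1) * (y$2 - c$2)) = 0"
    using w1 w2 \<open>?w = 0\<close> by simp_all
qed

lemma bounded_domain_measurable:
  assumes "bounded_domain D"
  shows "bounded D" "D \<in> sets lebesgue" "area D > 0"
  using assms area_pos lmeasurable_open fmeasurableD unfolding bounded_domain_def by blast+

text \<open>For symmetry of order N \<ge> 3 both conditions hold for t = 2 pi / N, since
  0 < t < 2t < 2 pi; the centre of symmetry is therefore the centroid.\<close>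
lemma rot_symmetric_moments:
  assumes "bounded_domain D" "N \<ge> 3" "rot_symmetric N D"
  defines "c \<equiv> centroid D"
  shows "integral D (\<lambda>y. (y$1 - c$1)\<^sup>2) = integral D (\<lambda>y. (y$2 - c$2)\<^sup>2)"
    and "integral D (\<lambda>y. (y$1 - c$1) * (y$2 - c$2)) = 0"
proof -
  define t where "t = 2 * pi / real N"
  obtain p where invariant: "(\<lambda>x. p + rot_mat t *v (x - p)) ` D = D"
    using assms(3) unfolding rot_symmetric_def t_def by blast
  note D = bounded_domain_measurable[OF assms(1)]
  have "0 < t" and "2 * t < 2 * pi"
    using assms(2) by (simp_all add: t_def field_simps)
  then have "cos t \<noteq> 1" and "cos (2 * t) \<noteq> 1"
    using cos_ne_1 by simp_all
  with D invariant have "c = p"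
    unfolding c_def by (intro centroid_eq_rotation_center)
  with D(1,2) invariant \<open>cos (2 * t) \<noteq> 1\<close>
  show "integral D (\<lambda>y. (y$1 - c$1)\<^sup>2) = integral D (\<lambda>y. (y$2 - c$2)\<^sup>2)"
    and "integral D (\<lambda>y. (y$1 - c$1) * (y$2 - c$2)) = 0"
    using second_moments_isotropic by blast+
qed

text \<open>The Euclidean norm on real^2^2 is the Frobenius norm of the matrix.\<close>
lemma norm_matrix_2: "(norm M)\<^sup>2 = (M$1$1)\<^sup>2 + (M$1$2)\<^sup>2 + (M$2$1)\<^sup>2 + (M$2$2)\<^sup>2"
  for M :: "real^2^2"
  unfolding power2_norm_eq_inner by (simp add: inner_vec_def sum_2 power2_eq_square)

lemma norm_transpose: "norm (transpose A) = norm A"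
  for A :: "real^'n^'m"
proof -
  have "inner (transpose A) (transpose A) = (\<Sum>i\<in>UNIV. \<Sum>j\<in>UNIV. A$j$i * A$j$i)"
    by (simp add: inner_vec_def transpose_def)
  also have "\<dots> = (\<Sum>j\<in>UNIV. \<Sum>i\<in>UNIV. A$j$i * A$j$i)"
    by (rule sum.swap)
  also have "\<dots> = inner A A"
    by (simp add: inner_vec_def)
  finally show ?thesis
    unfolding norm_eq_sqrt_inner by simp
qed

lemma norm_matrix_vector_mult_2:
  fixes M :: "real^2^2"
  shows "(norm (M *v z))\<^sup>2 = ((M$1$1)\<^sup>2 + (M$2$1)\<^sup>2) * (z$1)\<^sup>2
      + 2 * (M$1$1 * M$1$2 + M$2$1 * M$2$2) * (z$1 * z$2) + ((M$1$2)\<^sup>2 + (M$2$2)\<^sup>2) * (z$2)\<^sup>2"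
  unfolding power2_norm_eq_inner
  by (simp add: inner_vec_def sum_2 matrix_vector_mult_def) (simp add: power2_eq_square algebra_simps)

lemma integral_norm_matrix_isotropic:
  fixes M :: "real^2^2"
  assumes D: "bounded D" "D \<in> sets lebesgue"
    and isotropic: "integral D (\<lambda>y. (y$2 - c$2)\<^sup>2) = integral D (\<lambda>y. (y$1 - c$1)\<^sup>2)"
      "integral D (\<lambda>y. (y$1 - c$1) * (y$2 - c$2)) = 0"
  shows "integral D (\<lambda>y. (norm (M *v (y - c)))\<^sup>2) = (norm M)\<^sup>2 * integral D (\<lambda>y. (y$1 - c$1)\<^sup>2)"
proof -
  have integrable: "(\<lambda>y. (y$1 - c$1)\<^sup>2) integrable_on D"
    "(\<lambda>y. (y$2 - c$2)\<^sup>2) integrable_on D" "(\<lambda>y. (y$1 - c$1) * (y$2 - c$2)) integrable_on D"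
    by (intro continuous_integrable_on_bounded D continuous_intros)+
  have "integral D (\<lambda>y. (norm (M *v (y - c)))\<^sup>2)
      = ((M$1$1)\<^sup>2 + (M$2$1)\<^sup>2) * integral D (\<lambda>y. (y$1 - c$1)\<^sup>2)
        + 2 * (M$1$1 * M$1$2 + M$2$1 * M$2$2) * integral D (\<lambda>y. (y$1 - c$1) * (y$2 - c$2))
        + ((M$1$2)\<^sup>2 + (M$2$2)\<^sup>2) * integral D (\<lambda>y. (y$2 - c$2)\<^sup>2)"
    unfolding norm_matrix_vector_mult_2 vector_minus_component
    using integrable by (simp add: integral_add integrable_add integrable_on_mult_right)
  then show ?thesis
    unfolding isotropic norm_matrix_2 by (simp add: algebra_simps)
qed

lemma inertia_area_ratio_symmetric:
  assumes "bounded_domain D" "N \<ge> 3" "rot_symmetric N D" "invertible M"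
  shows "inertia ((\<lambda>x. M *v x) ` D) / (area ((\<lambda>x. M *v x) ` D))\<^sup>2
       = integral D (\<lambda>y. (y$1 - centroid D$1)\<^sup>2) / (area D)\<^sup>2 * ((norm M)\<^sup>2 / \<bar>det M\<bar>)"
proof -
  note D = bounded_domain_measurable[OF assms(1)]
  have "D \<in> lmeasurable" using D bounded_set_imp_lmeasurable by blast
  note moments = rot_symmetric_moments[OF assms(1-3)]
  let ?m = "integral D (\<lambda>y. (y$1 - centroid D$1)\<^sup>2)"
  define e where "e = \<bar>det M\<bar>"
  have "e > 0" using assms(4) invertible_det_nz unfolding e_def by auto
  have "inertia ((\<lambda>x. M *v x) ` D) / (area ((\<lambda>x. M *v x) ` D))\<^sup>2
      = e * ((norm M)\<^sup>2 * ?m) / (e * area D)\<^sup>2"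
    unfolding inertia_linear_image[OF D(1,2) assms(4)] area_linear_image[OF \<open>D \<in> lmeasurable\<close>]
      integral_norm_matrix_isotropic[OF D(1,2) moments(1)[symmetric] moments(2)] e_def ..
  also have "\<dots> = ?m / (area D)\<^sup>2 * ((norm M)\<^sup>2 / e)"
    using \<open>e > 0\<close> by (simp add: power2_eq_square ac_simps)
  finally show ?thesis unfolding e_def .
qed

lemma matrix_inv:
  assumes "invertible A"
  shows "A ** matrix_inv A = mat 1" and "matrix_inv A ** A = mat 1"
  using someI_ex[OF assms[unfolded invertible_def]] unfolding matrix_inv_def by blast+

lemma det_matrix_inv:
  fixes A :: "'a::field^'n^'n"
  assumes "invertible A"
  shows "det (matrix_inv A) = 1 / det A"
  using arg_cong[OF matrix_inv(1)[OF assms], of det] invertible_det_nz[of A] assms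
  by (simp add: det_mul field_simps)

lemma matrix_inv_2:
  fixes T :: "real^2^2"
  assumes "invertible T"
  shows "matrix_inv T $1$1 = T$2$2 / det T" "matrix_inv T $1$2 = - T$1$2 / det T"
    "matrix_inv T $2$1 = - T$2$1 / det T" "matrix_inv T $2$2 = T$1$1 / det T"
proof -
  let ?X = "matrix_inv T"
  have "det T \<noteq> 0" using assms invertible_det_nz by blast
  have "(T ** ?X) $ i $ j = mat 1 $ i $ j" for i j
    using matrix_inv(1)[OF assms] by simp
  then have e1: "T$1$1 * ?X$1$1 + T$1$2 * ?X$2$1 = 1" and e2: "T$1$1 * ?X$1$2 + T$1$2 * ?X$2$2 = 0"
    and e3: "T$2$1 * ?X$1$1 + T$2$2 * ?X$2$1 = 0" and e4: "T$2$1 * ?X$1$2 + T$2$2 * ?X$2$2 = 1"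
    by (simp_all add: matrix_matrix_mult_def sum_2 mat_def)
  have "det T * ?X$1$1 = T$2$2" "det T * ?X$1$2 = - T$1$2"
    "det T * ?X$2$1 = - T$2$1" "det T * ?X$2$2 = T$1$1"
    using e1 e2 e3 e4 unfolding det_2 by algebra+
  with \<open>det T \<noteq> 0\<close> show "?X$1$1 = T$2$2 / det T" "?X$1$2 = - T$1$2 / det T"
    "?X$2$1 = - T$2$1 / det T" "?X$2$2 = T$1$1 / det T"
    by (simp_all add: field_simps)
qed

text \<open>In dimension two, |M|^2 / |det M| is invariant under inversion, because the
  adjugate has the same Frobenius norm as M.\<close>
lemma distortion_matrix_inv_2:
  fixes T :: "real^2^2"
  assumes "invertible T"
  shows "(norm (matrix_inv T))\<^sup>2 / \<bar>det (matrix_inv T)\<bar> = (norm T)\<^sup>2 / \<bar>det T\<bar>"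
proof -
  define e where "e = \<bar>det T\<bar>"
  have "e > 0" using assms invertible_det_nz unfolding e_def by auto
  have "(norm (matrix_inv T))\<^sup>2 = (norm T)\<^sup>2 / (det T)\<^sup>2"
    unfolding norm_matrix_2 matrix_inv_2[OF assms] by (simp add: power_divide add_divide_distrib)
  then have "(norm (matrix_inv T))\<^sup>2 / \<bar>det (matrix_inv T)\<bar> = (norm T)\<^sup>2 / e\<^sup>2 * e"
    unfolding det_matrix_inv[OF assms] e_def by simp
  also have "\<dots> = (norm T)\<^sup>2 / e"
    using \<open>e > 0\<close> by (simp add: power2_eq_square)
  finally show ?thesis unfolding e_def .
qed

theorem mainTheorem11:
  fixes D :: "(real^2) set" and T :: "real^2^2" and N :: nat
  assumes "bounded_domain D"
    and "N \<ge> 3"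
    and "rot_symmetric N D"
    and "invertible T"
  shows "inertia ((\<lambda>x. T *v x) ` D) / (area ((\<lambda>x. T *v x) ` D))\<^sup>2
           = inertia ((\<lambda>x. matrix_inv T *v x) ` D) / (area ((\<lambda>x. matrix_inv T *v x) ` D))\<^sup>2
       \<and> inertia ((\<lambda>x. T *v x) ` D) / (area ((\<lambda>x. T *v x) ` D))\<^sup>2
           = inertia ((\<lambda>x. transpose (matrix_inv T) *v x) ` D)
               / (area ((\<lambda>x. transpose (matrix_inv T) *v x) ` D))\<^sup>2"
proof -
  let ?X = "matrix_inv T"
  let ?K = "integral D (\<lambda>y. (y$1 - centroid D$1)\<^sup>2) / (area D)\<^sup>2"
  note ratio = inertia_area_ratio_symmetric[OF assms(1-3)]
  have "invertible ?X"
    using matrix_inv[OF assms(4)] unfolding invertible_def by blast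
  have ratio_T: "inertia ((\<lambda>x. T *v x) ` D) / (area ((\<lambda>x. T *v x) ` D))\<^sup>2
      = ?K * ((norm T)\<^sup>2 / \<bar>det T\<bar>)"
    by (rule ratio[OF assms(4)])
  have ratio_inv: "inertia ((\<lambda>x. ?X *v x) ` D) / (area ((\<lambda>x. ?X *v x) ` D))\<^sup>2
      = ?K * ((norm T)\<^sup>2 / \<bar>det T\<bar>)"
    using ratio[OF \<open>invertible ?X\<close>] unfolding distortion_matrix_inv_2[OF assms(4)] .
  have ratio_inv_transpose:
    "inertia ((\<lambda>x. transpose ?X *v x) ` D) / (area ((\<lambda>x. transpose ?X *v x) ` D))\<^sup>2
      = ?K * ((norm T)\<^sup>2 / \<bar>det T\<bar>)"
    using ratio[OF transpose_invertible[OF \<open>invertible ?X\<close>]]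
    unfolding norm_transpose det_transpose distortion_matrix_inv_2[OF assms(4)] .
  show ?thesis
    using ratio_T ratio_inv ratio_inv_transpose by simp
qed

end
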